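(* Let $n\geqslant 2$, $\lambda>0$, let $p_1,\ldots,p_M\in\mathbb{Z}^n$ be distinct points and $n_1,\ldots,n_M$ positive integers, and write $g=4\pi\sum_{j=1}^M n_j\delta_{p_j}$. Let $u$ be the maximal topological solution of the Chern–Simons equation $$\Delta u=\lambda e^u(e^u-1)+g\ \text{ on }\mathbb{Z}^n,\qquad \lim_{d(x)\to+\infty}u(x)=0$$ (i.e. the solution $u$ of this problem with $f\leqslant u$ for every other solution $f$ of this problem; such $u$ exists). Then the Abelian Higgs equation $$\Delta u'=\lambda(e^{u'}-1)+g\ \text{ on }\mathbb{Z}^n,\qquad \lim_{d(x)\to+\infty}u'(x)=0$$ has a unique solution $u'$, this solution satisfies $u'\in l^p(\mathbb{Z}^n)$ for every $1\leqslant p\leqslant\infty$ and $u\leqslant u'\leqslant 0$ on $\mathbb{Z}^n$, and, with $m=\ln(1+\frac{\lambda}{2n})$, for every $0<\epsilon<1$ one has $u'(x)=O(e^{-m(1-\epsilon)d(x)})$ as $d(x)\to+\infty$.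
   Context: $\mathbb{Z}^n$ is the integer lattice graph: vertices are the points of $\mathbb{Z}^n$, and $x\sim y$ iff $\sum_{i=1}^n|x_i-y_i|=1$. The distance is $d(x,y)=\sum_{i=1}^n|x_i-y_i|$ and $d(x)=d(x,0)$. The Laplacian is $\Delta u(x)=\sum_{y\sim x}(u(y)-u(x))$. $\delta_p$ denotes the function on $\mathbb{Z}^n$ equal to $1$ at $p$ and $0$ elsewhere. $l^p(\mathbb{Z}^n)$ denotes the usual sequence spaces on $\mathbb{Z}^n$. *)

theory Defs
  imports "HOL-Analysis.Analysis"
begin

text \<open>The lattice Z^n is modelled as the type int ^ 'n, where 'n is a finite
index type with CARD('n) = n.\<close>

definition ldist :: "int ^ 'n \<Rightarrow> int ^ 'n \<Rightarrow> int" where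
  "ldist x y = (\<Sum>i\<in>UNIV. \<bar>x $ i - y $ i\<bar>)"

definition ldnorm :: "int ^ 'n \<Rightarrow> int" where
  "ldnorm x = ldist x 0"

definition lnbrs :: "int ^ 'n \<Rightarrow> (int ^ 'n) set" where
  "lnbrs x = {y. ldist x y = 1}"

definition llap :: "(int ^ 'n \<Rightarrow> real) \<Rightarrow> int ^ 'n \<Rightarrow> real" where
  "llap u x = (\<Sum>y\<in>lnbrs x. (u y - u x))"

definition ldelta :: "int ^ 'n \<Rightarrow> int ^ 'n \<Rightarrow> real" where
  "ldelta p x = (if x = p then 1 else 0)"

definition vanishes_at_infinity :: "(int ^ 'n \<Rightarrow> real) \<Rightarrow> bool" where
  "vanishes_at_infinity u \<longleftrightarrow>
     (\<forall>e>0. \<exists>R. \<forall>x. real_of_int (ldnorm x) > R \<longrightarrow> \<bar>u x\<bar> < e)"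

definition CS_solution :: "real \<Rightarrow> (int ^ 'n \<Rightarrow> real) \<Rightarrow> (int ^ 'n \<Rightarrow> real) \<Rightarrow> bool" where
  "CS_solution lam g u \<longleftrightarrow>
     (\<forall>x. llap u x = lam * exp (u x) * (exp (u x) - 1) + g x) \<and> vanishes_at_infinity u"

definition AH_solution :: "real \<Rightarrow> (int ^ 'n \<Rightarrow> real) \<Rightarrow> (int ^ 'n \<Rightarrow> real) \<Rightarrow> bool" where
  "AH_solution lam g u \<longleftrightarrow>
     (\<forall>x. llap u x = lam * (exp (u x) - 1) + g x) \<and> vanishes_at_infinity u"

definition in_lp :: "real \<Rightarrow> (int ^ 'n \<Rightarrow> real) \<Rightarrow> bool" where
  "in_lp p u \<longleftrightarrow> (\<lambda>x. \<bar>u x\<bar> powr p) summable_on UNIV"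

definition in_linf :: "(int ^ 'n \<Rightarrow> real) \<Rightarrow> bool" where
  "in_linf u \<longleftrightarrow> (\<exists>C. \<forall>x. \<bar>u x\<bar> \<le> C)"

end

theory Submission
  imports Defs
begin

text \<open>
  Everything rests on a discrete maximum principle: if z is positive somewhere and its positive
  part vanishes at infinity, then z attains a positive maximum, where its Laplacian is
  nonpositive. This gives u' <= 0, uniqueness, and u <= u' because
  exp u (exp u - 1) >= exp u - 1. For existence, u is a subsolution and 0 a supersolution of
  the Abelian Higgs equation; solving the equation at each point for the central value turns it
  into a monotone fixed-point problem, solved by the pointwise infimum of all supersolutions
  between u and 0. For the decay, outside the support of g the function w = -u' satisfies
  \<Delta>w >= \<lambda>w/2, while h(x) = exp (-a d(x)) satisfies \<Delta>h <= n (exp a - 1) h <= \<lambda>h/2 as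
  soon as a <= m. The maximum principle applied to w - C h gives w <= C h, and summability of h
  over the lattice gives every l^p bound.
\<close>

section \<open>The lattice Laplacian\<close>

definition lunit :: "'n::finite \<Rightarrow> int ^ 'n" where
  "lunit i = (\<chi> j. if j = i then 1 else 0)"

lemma ldist_eq_1_iff:
  fixes x y :: "int ^ 'n::finite"
  shows "ldist x y = 1 \<longleftrightarrow> (\<exists>i. y = x + lunit i \<or> y = x - lunit i)"
proof
  assume "ldist x y = 1"
  then have sum_1: "(\<Sum>j\<in>UNIV. \<bar>x $ j - y $ j\<bar>) = 1"
    by (simp add: ldist_def)
  then obtain i where "x $ i \<noteq> y $ i"
    by (metis (mono_tags, lifting) abs_0 right_minus_eq sum.neutral zero_neq_one)
  moreover have "(\<Sum>j\<in>UNIV. \<bar>x $ j - y $ j\<bar>) = \<bar>x $ i - y $ i\<bar> + (\<Sum>j\<in>UNIV - {i}. \<bar>x $ j - y $ j\<bar>)"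
    by (simp add: sum.remove)
  moreover have "(\<Sum>j\<in>UNIV - {i}. \<bar>x $ j - y $ j\<bar>) \<ge> 0"
    by (simp add: sum_nonneg)
  ultimately have "\<bar>x $ i - y $ i\<bar> = 1" and "(\<Sum>j\<in>UNIV - {i}. \<bar>x $ j - y $ j\<bar>) = 0"
    using sum_1 by linarith+
  then have "y $ i = x $ i + 1 \<or> y $ i = x $ i - 1" and "\<forall>j. j \<noteq> i \<longrightarrow> y $ j = x $ j"
    by (auto simp: sum_nonneg_eq_0_iff)
  then show "\<exists>i. y = x + lunit i \<or> y = x - lunit i"
    by (auto simp: vec_eq_iff lunit_def)
qed (auto simp: ldist_def lunit_def if_distrib cong: if_cong)

lemma lnbrs_eq: "lnbrs (x :: int ^ 'n::finite) = (\<Union>i. {x + lunit i, x - lunit i})"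
  by (auto simp: lnbrs_def ldist_eq_1_iff)

lemma finite_lnbrs: "finite (lnbrs (x :: int ^ 'n::finite))"
  by (simp add: lnbrs_eq)

lemma card_lnbrs_pos: "card (lnbrs (x :: int ^ 'n::finite)) > 0"
  by (auto simp: card_gt_0_iff finite_lnbrs lnbrs_eq)

lemma llap_eq_sum_directions:
  fixes x :: "int ^ 'n::finite"
  shows "llap h x = (\<Sum>i\<in>UNIV. h (x + lunit i) + h (x - lunit i) - 2 * h x)"
proof -
  have "llap h x = (\<Sum>i\<in>UNIV. \<Sum>y\<in>{x + lunit i, x - lunit i}. h y - h x)"
    unfolding llap_def lnbrs_eq
    by (rule sum.UNION_disjoint) (auto simp: lunit_def vec_eq_iff)
  also have "\<dots> = (\<Sum>i\<in>UNIV. h (x + lunit i) + h (x - lunit i) - 2 * h x)"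
    by (rule sum.cong) (auto simp: lunit_def vec_eq_iff)
  finally show ?thesis .
qed

lemma llap_eq_sum_minus_card: "llap f x = sum f (lnbrs x) - real (card (lnbrs x)) * f x"
  by (simp add: llap_def sum_subtractf)

lemma llap_linear: "llap (\<lambda>y. a * f y + b * h y) x = a * llap f x + b * llap h x"
proof -
  have "llap (\<lambda>y. a * f y + b * h y) x = (\<Sum>y\<in>lnbrs x. a * (f y - f x) + b * (h y - h x))"
    unfolding llap_def by (rule sum.cong) (auto simp: algebra_simps)
  then show ?thesis
    by (simp add: llap_def sum.distrib sum_distrib_left)
qed

lemma llap_diff: "llap (\<lambda>y. f y - h y) x = llap f x - llap h x"
  using llap_linear[of 1 f "-1" h x] by simp

lemma llap_const: "llap (\<lambda>_. c) x = 0"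
  by (simp add: llap_def)

lemma llap_minus: "llap (\<lambda>y. - f y) x = - llap f x"
  using llap_diff[of "\<lambda>_. 0" f x] by (simp add: llap_const)

lemma llap_nonpos_at_max: "(\<And>y. z y \<le> z x) \<Longrightarrow> llap z x \<le> 0"
  unfolding llap_def by (rule sum_nonpos) auto

lemma ldnorm_eq_component_plus_rest:
  "ldnorm (x :: int ^ 'n::finite) = \<bar>x $ i\<bar> + (\<Sum>j\<in>UNIV - {i}. \<bar>x $ j\<bar>)"
  by (simp add: ldnorm_def ldist_def sum.remove)

lemma ldnorm_add_lunit: "ldnorm (x + lunit i) = ldnorm x - \<bar>x $ i\<bar> + \<bar>x $ i + 1\<bar>"
  and ldnorm_diff_lunit: "ldnorm (x - lunit i) = ldnorm x - \<bar>x $ i\<bar> + \<bar>x $ i - 1\<bar>"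
  by (simp_all add: ldnorm_eq_component_plus_rest[of _ i] lunit_def)

lemma finite_ldnorm_le: "finite {x :: int ^ 'n::finite. real_of_int (ldnorm x) \<le> R}"
proof (rule finite_subset)
  let ?box = "PiE (UNIV :: 'n set) (\<lambda>_. {-\<lceil>R\<rceil>..\<lceil>R\<rceil>})"
  show "{x :: int ^ 'n. real_of_int (ldnorm x) \<le> R} \<subseteq> vec_lambda ` ?box"
  proof
    fix x :: "int ^ 'n"
    assume "x \<in> {x. real_of_int (ldnorm x) \<le> R}"
    then have "ldnorm x \<le> \<lceil>R\<rceil>"
      by (simp add: le_ceiling_iff)
    moreover have "\<bar>x $ i\<bar> \<le> ldnorm x" for i
      using ldnorm_eq_component_plus_rest[of x i] by (simp add: sum_nonneg)
    ultimately have "\<bar>x $ i\<bar> \<le> \<lceil>R\<rceil>" for i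
      by (meson order_trans)
    then have "vec_nth x \<in> ?box"
      by (auto simp: PiE_UNIV_domain abs_le_iff minus_le_iff)
    then show "x \<in> vec_lambda ` ?box"
      by (metis image_eqI vec_nth_inverse)
  qed
  show "finite (vec_lambda ` ?box)"
    by (intro finite_imageI finite_PiE) auto
qed

section \<open>Maximum principle\<close>

lemma vanishes_at_infinity_diff:
  assumes "vanishes_at_infinity f" "vanishes_at_infinity h"
  shows "vanishes_at_infinity (\<lambda>x. f x - h x)"
  unfolding vanishes_at_infinity_def
proof (intro allI impI)
  fix e :: real
  assume "e > 0"
  then have "e / 2 > 0"
    by simp
  then obtain R1 R2 where
    R1: "\<forall>x. real_of_int (ldnorm x) > R1 \<longrightarrow> \<bar>f x\<bar> < e / 2" and
    R2: "\<forall>x. real_of_int (ldnorm x) > R2 \<longrightarrow> \<bar>h x\<bar> < e / 2"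
    using assms unfolding vanishes_at_infinity_def by meson
  have "\<bar>f x - h x\<bar> < e" if "real_of_int (ldnorm x) > max R1 R2" for x
    using R1[rule_format, of x] R2[rule_format, of x] that by linarith
  then show "\<exists>R. \<forall>x. real_of_int (ldnorm x) > R \<longrightarrow> \<bar>f x - h x\<bar> < e"
    by blast
qed

lemma vanishes_at_infinity_dominated:
  assumes "vanishes_at_infinity h" "\<And>x. \<bar>f x\<bar> \<le> \<bar>h x\<bar>"
  shows "vanishes_at_infinity f"
  unfolding vanishes_at_infinity_def
proof (intro allI impI)
  fix e :: real
  assume "e > 0"
  then obtain R where R: "\<forall>x. real_of_int (ldnorm x) > R \<longrightarrow> \<bar>h x\<bar> < e"
    using assms(1) unfolding vanishes_at_infinity_def by blast
  have "\<bar>f x\<bar> < e" if "real_of_int (ldnorm x) > R" for x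
    using assms(2)[of x] R that by fastforce
  then show "\<exists>R. \<forall>x. real_of_int (ldnorm x) > R \<longrightarrow> \<bar>f x\<bar> < e"
    by blast
qed

lemma vanishes_at_infinity_zero: "vanishes_at_infinity (\<lambda>_. 0)"
  by (auto simp: vanishes_at_infinity_def)

lemma vanishes_at_infinity_attains_max:
  fixes z :: "int ^ 'n::finite \<Rightarrow> real"
  assumes "vanishes_at_infinity (\<lambda>x. max (z x) 0)" "z x1 > 0"
  shows "\<exists>x0. z x0 > 0 \<and> (\<forall>y. z y \<le> z x0)"
proof -
  obtain R where R: "\<forall>x. real_of_int (ldnorm x) > R \<longrightarrow> \<bar>max (z x) 0\<bar> < z x1"
    using assms unfolding vanishes_at_infinity_def by meson
  have far: "z x < z x1" if "real_of_int (ldnorm x) > R" for x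
  proof -
    have "z x \<le> \<bar>max (z x) 0\<bar>"
      by (metis abs_ge_self max.cobounded1 order_trans)
    then show ?thesis
      using R that by force
  qed
  define ball where "ball = {x :: int ^ 'n. real_of_int (ldnorm x) \<le> R}"
  have "finite ball"
    unfolding ball_def by (rule finite_ldnorm_le)
  have "x1 \<in> ball"
    using far[of x1] by (force simp: ball_def)
  have "Max (z ` ball) \<in> z ` ball"
    using \<open>finite ball\<close> \<open>x1 \<in> ball\<close> by (intro Max_in) auto
  then obtain x0 where "x0 \<in> ball" and z_x0: "z x0 = Max (z ` ball)"
    by (auto simp del: Max_in)
  have x0_max: "z y \<le> z x0" for y
  proof (cases "y \<in> ball")
    case True
    then show ?thesis
      using \<open>finite ball\<close> z_x0 by simp
  next
    case False
    then have "z y < z x1"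
      using far by (simp add: ball_def)
    moreover have "z x1 \<le> z x0"
      using \<open>finite ball\<close> \<open>x1 \<in> ball\<close> z_x0 by simp
    ultimately show ?thesis
      by simp
  qed
  moreover have "z x0 > 0"
    using x0_max[of x1] \<open>z x1 > 0\<close> by simp
  ultimately show ?thesis
    by blast
qed

lemma vanishes_at_infinity_imp_in_linf:
  assumes "vanishes_at_infinity w"
  shows "in_linf w"
proof (cases "\<exists>x1. \<bar>w x1\<bar> > 0")
  case True
  moreover have "vanishes_at_infinity (\<lambda>x. max \<bar>w x\<bar> 0)"
    using assms by (rule vanishes_at_infinity_dominated) simp
  ultimately show ?thesis
    using vanishes_at_infinity_attains_max[of "\<lambda>x. \<bar>w x\<bar>"] by (auto simp: in_linf_def)
qed (auto simp: in_linf_def)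

lemma maximum_principle:
  assumes "vanishes_at_infinity (\<lambda>x. max (z x) 0)"
    and "\<And>x. 0 < z x \<Longrightarrow> 0 < llap z x"
  shows "z x \<le> 0"
proof (rule ccontr)
  assume "\<not> z x \<le> 0"
  then have "0 < z x"
    by simp
  then obtain x0 where "0 < z x0" "\<forall>y. z y \<le> z x0"
    using vanishes_at_infinity_attains_max[OF assms(1)] by blast
  moreover have "llap z x0 \<le> 0"
    using \<open>\<forall>y. z y \<le> z x0\<close> by (intro llap_nonpos_at_max) simp
  ultimately show False
    using assms(2)[of x0] by simp
qed

lemma comparison_principle:
  assumes "vanishes_at_infinity f" "vanishes_at_infinity h"
    and "\<And>x. h x < f x \<Longrightarrow> llap h x < llap f x"
  shows "f x \<le> h x"
proof -
  have "vanishes_at_infinity (\<lambda>x. max (f x - h x) 0)"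
    using vanishes_at_infinity_diff[OF assms(1,2)] by (rule vanishes_at_infinity_dominated) simp
  then have "f x - h x \<le> 0"
    by (rule maximum_principle) (simp add: llap_diff assms(3))
  then show ?thesis
    by simp
qed

lemma CS_solution_nonpos:
  assumes "lam > 0" "\<forall>x. g x \<ge> 0" "CS_solution lam g u"
  shows "u x \<le> 0"
proof (rule comparison_principle[OF _ vanishes_at_infinity_zero])
  show "vanishes_at_infinity u"
    using assms(3) by (simp add: CS_solution_def)
  show "llap (\<lambda>_. 0) y < llap u y" if "0 < u y" for y
    using assms that by (simp add: CS_solution_def llap_const add_pos_nonneg)
qed

lemma AH_solution_nonpos:
  assumes "lam > 0" "\<forall>x. g x \<ge> 0" "AH_solution lam g u"
  shows "u x \<le> 0"
proof (rule comparison_principle[OF _ vanishes_at_infinity_zero])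
  show "vanishes_at_infinity u"
    using assms(3) by (simp add: AH_solution_def)
  show "llap (\<lambda>_. 0) y < llap u y" if "0 < u y" for y
    using assms that by (simp add: AH_solution_def llap_const add_pos_nonneg)
qed

lemma AH_solution_unique:
  assumes "lam > 0" "AH_solution lam g u" "AH_solution lam g v"
  shows "u = v"
proof -
  have "u x \<le> v x" if "AH_solution lam g u" "AH_solution lam g v" for u v x
    using that assms(1) by (intro comparison_principle) (auto simp: AH_solution_def)
  then show ?thesis
    using assms by (intro ext order.antisym) blast+
qed

lemma CS_solution_le_AH_solution:
  assumes "lam > 0" "CS_solution lam g u" "AH_solution lam g v"
  shows "u x \<le> v x"
proof (rule comparison_principle)
  show "vanishes_at_infinity u" "vanishes_at_infinity v"
    using assms by (simp_all add: CS_solution_def AH_solution_def)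
  show "llap v y < llap u y" if "v y < u y" for y
  proof -
    have "exp (v y) < exp (u y)"
      using that by simp
    then have "0 < (exp (u y) - 1)\<^sup>2 + (exp (u y) - exp (v y))"
      by (simp add: add_nonneg_pos)
    also have "\<dots> = exp (u y) * (exp (u y) - 1) - (exp (v y) - 1)"
      by (simp add: power2_eq_square algebra_simps)
    finally have "exp (v y) - 1 < exp (u y) * (exp (u y) - 1)"
      by simp
    then have "lam * (exp (v y) - 1) < lam * exp (u y) * (exp (u y) - 1)"
      using assms(1) by (simp add: mult.assoc)
    moreover have "llap u y = lam * exp (u y) * (exp (u y) - 1) + g y"
      and "llap v y = lam * (exp (v y) - 1) + g y"
      using assms(2,3) by (simp_all add: CS_solution_def AH_solution_def)
    ultimately show ?thesis
      by simp
  qed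
qed

section \<open>Existence between a sub- and a supersolution\<close>

lemma fixpoint_between_sub_super:
  fixes T :: "('a \<Rightarrow> 'b::conditionally_complete_lattice) \<Rightarrow> 'a \<Rightarrow> 'b"
  assumes mono: "\<And>v w. v \<le> w \<Longrightarrow> T v \<le> T w"
    and sub: "u \<le> T u" and super: "T w \<le> w" and "u \<le> w"
  shows "\<exists>v. T v = v \<and> u \<le> v \<and> v \<le> w"
proof -
  define A where "A = {f. u \<le> f \<and> f \<le> w \<and> T f \<le> f}"
  define v where "v x = Inf ((\<lambda>f. f x) ` A)" for x
  have "w \<in> A"
    using super \<open>u \<le> w\<close> by (simp add: A_def)
  have bdd: "bdd_below ((\<lambda>f. f x) ` A)" for x
    by (rule bdd_belowI[of _ "u x"]) (auto simp: A_def le_fun_def)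
  have v_le: "v \<le> f" if "f \<in> A" for f
    unfolding le_fun_def v_def using that bdd by (auto intro: cInf_lower)
  have le_v: "f \<le> v" if "\<And>g. g \<in> A \<Longrightarrow> f \<le> g" for f
    unfolding le_fun_def v_def using \<open>w \<in> A\<close> that by (auto intro!: cInf_greatest simp: le_fun_def)
  have "u \<le> v"
    by (rule le_v) (simp add: A_def)
  have "T v \<le> v"
  proof (rule le_v)
    fix f
    assume "f \<in> A"
    then have "T v \<le> T f" and "T f \<le> f"
      using mono v_le by (simp_all add: A_def)
    then show "T v \<le> f"
      by (rule order_trans)
  qed
  have "v \<le> w"
    using \<open>w \<in> A\<close> by (rule v_le)
  have "u \<le> T v"
    using sub mono[OF \<open>u \<le> v\<close>] by (rule order_trans)
  moreover have "T v \<le> w"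
    using \<open>T v \<le> v\<close> \<open>v \<le> w\<close> by (rule order_trans)
  moreover have "T (T v) \<le> T v"
    using mono[OF \<open>T v \<le> v\<close>] .
  ultimately have "v \<le> T v"
    by (intro v_le) (simp add: A_def)
  then show ?thesis
    using \<open>T v \<le> v\<close> \<open>u \<le> v\<close> \<open>v \<le> w\<close> by (intro exI[of _ v]) simp
qed

lemma strict_mono_linear_plus_mono:
  fixes N :: "real \<Rightarrow> real"
  assumes "k > 0" "mono N"
  shows "strict_mono (\<lambda>t. k * t + N t)"
  using assms by (intro strict_monoI add_less_le_mono) (simp_all add: monoD)

lemma surj_linear_plus_mono:
  fixes N :: "real \<Rightarrow> real"
  assumes "k > 0" "mono N" "continuous_on UNIV N"
  shows "surj (\<lambda>t. k * t + N t)"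
proof -
  have "\<exists>t. k * t + N t = c" for c
  proof -
    define a where "a = min 0 ((c - N 0) / k)"
    define b where "b = max 0 ((c - N 0) / k)"
    have "k * a \<le> k * ((c - N 0) / k)" "k * ((c - N 0) / k) \<le> k * b"
      using assms(1) by (intro mult_left_mono; simp add: a_def b_def)+
    moreover have "k * ((c - N 0) / k) = c - N 0"
      using assms(1) by simp
    moreover have "N a \<le> N 0" "N 0 \<le> N b"
      using assms(2) by (simp_all add: a_def b_def monoD)
    ultimately have "k * a + N a \<le> c" "c \<le> k * b + N b"
      by linarith+
    moreover have "a \<le> b"
      by (simp add: a_def b_def)
    moreover have "continuous_on {a..b} (\<lambda>t. k * t + N t)"
      using assms(3) by (intro continuous_intros) (auto intro: continuous_on_subset)
    ultimately show ?thesis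
      using IVT'[of "\<lambda>t. k * t + N t" a c b] by blast
  qed
  then show ?thesis
    unfolding surj_def by (metis)
qed

lemma strict_mono_surj_inv_le_iff:
  fixes f :: "'a::linorder \<Rightarrow> 'b::linorder"
  assumes "strict_mono f" "surj f"
  shows "inv f c \<le> t \<longleftrightarrow> c \<le> f t" and "t \<le> inv f c \<longleftrightarrow> f t \<le> c"
  using strict_mono_less_eq[OF assms(1)] surj_f_inv_f[OF assms(2)] by metis+

lemma exists_solution_between_sub_super:
  fixes N :: "real \<Rightarrow> real" and g u w :: "int ^ 'n::finite \<Rightarrow> real"
  assumes "mono N" "continuous_on UNIV N"
    and sub: "\<And>x. N (u x) + g x \<le> llap u x"
    and super: "\<And>x. llap w x \<le> N (w x) + g x"
    and "u \<le> w"
  shows "\<exists>v. (\<forall>x. llap v x = N (v x) + g x) \<and> u \<le> v \<and> v \<le> w"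
proof -
  define F where "F x t = real (card (lnbrs x)) * t + N t" for x :: "int ^ 'n" and t
  have F: "strict_mono (F x)" "surj (F x)" for x
    unfolding F_def using card_lnbrs_pos[of x] assms(1,2)
    by (simp_all add: strict_mono_linear_plus_mono surj_linear_plus_mono)
  \<comment> \<open>T f x is the value at x that solves the equation when the neighbours take the values of f\<close>
  define T where "T f x = inv (F x) (sum f (lnbrs x) - g x)" for f x
  have F_T: "F x (T f x) = sum f (lnbrs x) - g x" for f x
    unfolding T_def using F(2) by (rule surj_f_inv_f)
  have le_T_iff: "t \<le> T f x \<longleftrightarrow> F x t \<le> sum f (lnbrs x) - g x" for t f x
    unfolding T_def using F by (rule strict_mono_surj_inv_le_iff)
  have T_le_iff: "T f x \<le> t \<longleftrightarrow> sum f (lnbrs x) - g x \<le> F x t" for t f x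
    unfolding T_def using F by (rule strict_mono_surj_inv_le_iff)
  have "T f1 \<le> T f2" if "f1 \<le> f2" for f1 f2
    unfolding le_fun_def le_T_iff F_T using that by (simp add: le_fun_def sum_mono)
  moreover have "u x \<le> T u x" for x
    using sub[of x] unfolding le_T_iff F_def llap_eq_sum_minus_card by linarith
  moreover have "T w x \<le> w x" for x
    using super[of x] unfolding T_le_iff F_def llap_eq_sum_minus_card by linarith
  ultimately obtain v where "T v = v" "u \<le> v" "v \<le> w"
    using fixpoint_between_sub_super[of T u w] \<open>u \<le> w\<close> by (auto simp: le_fun_def)
  moreover have "llap v x = N (v x) + g x" for x
    using F_T[of x v] \<open>T v = v\<close> by (simp add: F_def llap_eq_sum_minus_card)
  ultimately show ?thesis
    by blast
qed

lemma AH_solution_exists_if_CS_solution: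
  assumes "lam > 0" "\<forall>x. g x \<ge> 0" "CS_solution lam g u"
  shows "\<exists>v. AH_solution lam g v"
proof -
  have "lam * (exp (u x) - 1) + g x \<le> llap u x" for x
  proof -
    have "lam * (exp (u x) - 1) \<le> lam * (exp (u x) - 1) + lam * (exp (u x) - 1)\<^sup>2"
      using assms(1) by simp
    also have "\<dots> = lam * exp (u x) * (exp (u x) - 1)"
      by (simp add: power2_eq_square algebra_simps)
    finally show ?thesis
      using assms(3) by (simp add: CS_solution_def)
  qed
  moreover have "llap (\<lambda>_. 0) x \<le> lam * (exp 0 - 1) + g x" for x
    using assms(2) by (simp add: llap_const)
  moreover have "u \<le> (\<lambda>_. 0)"
    using CS_solution_nonpos[OF assms] by (simp add: le_fun_def)
  moreover have "mono (\<lambda>t. lam * (exp t - 1))"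
    using assms(1) by (intro monoI) simp
  moreover have "continuous_on UNIV (\<lambda>t. lam * (exp t - 1))"
    by (intro continuous_intros)
  ultimately obtain v where v: "\<forall>x. llap v x = lam * (exp (v x) - 1) + g x" "u \<le> v" "v \<le> (\<lambda>_. 0)"
    using exists_solution_between_sub_super[of "\<lambda>t. lam * (exp t - 1)" u g "\<lambda>_. 0"] by auto
  have "vanishes_at_infinity v"
  proof (rule vanishes_at_infinity_dominated)
    show "vanishes_at_infinity u"
      using assms(3) by (simp add: CS_solution_def)
    show "\<bar>v x\<bar> \<le> \<bar>u x\<bar>" for x
      using v(2,3) by (simp add: le_fun_def) (metis abs_of_nonpos neg_le_iff_le order_trans)
  qed
  then show ?thesis
    using v(1) by (auto simp: AH_solution_def)
qed

section \<open>Exponential decay\<close>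

lemma exp_ldnorm_neighbours_le:
  fixes x :: "int ^ 'n::finite"
  assumes "a \<ge> 0"
  shows "exp (- a * real_of_int (ldnorm (x + lunit i))) + exp (- a * real_of_int (ldnorm (x - lunit i)))
    \<le> (exp a + 1) * exp (- a * real_of_int (ldnorm x))"
proof -
  let ?h = "\<lambda>y :: int ^ 'n. exp (- a * real_of_int (ldnorm y))"
  have near: "?h y \<le> exp a * ?h x" if "ldnorm x - 1 \<le> ldnorm y" for y
  proof -
    have "- a * real_of_int (ldnorm y) \<le> a + - a * real_of_int (ldnorm x)"
      using that assms mult_left_mono[of "real_of_int (ldnorm x) - 1" "real_of_int (ldnorm y)" a]
      by (simp add: algebra_simps)
    then show ?thesis
      by (simp add: exp_add[symmetric])
  qed
  have far: "?h y \<le> ?h x" if "ldnorm x \<le> ldnorm y" for y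
    using that assms by (simp add: mult_left_mono)
  have "ldnorm x - 1 \<le> ldnorm (x + lunit i)" "ldnorm x - 1 \<le> ldnorm (x - lunit i)"
    and "ldnorm x \<le> ldnorm (x + lunit i) \<or> ldnorm x \<le> ldnorm (x - lunit i)"
    unfolding ldnorm_add_lunit ldnorm_diff_lunit by linarith+
  then consider "?h (x + lunit i) \<le> ?h x" "?h (x - lunit i) \<le> exp a * ?h x"
    | "?h (x + lunit i) \<le> exp a * ?h x" "?h (x - lunit i) \<le> ?h x"
    using near far by blast
  moreover have "(exp a + 1) * ?h x = exp a * ?h x + ?h x"
    by (simp add: distrib_right)
  ultimately show ?thesis
    by cases linarith+
qed

lemma llap_exp_ldnorm_le:
  fixes x :: "int ^ 'n::finite"
  assumes "a \<ge> 0"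
  shows "llap (\<lambda>y. exp (- a * real_of_int (ldnorm y))) x
    \<le> real CARD('n) * (exp a - 1) * exp (- a * real_of_int (ldnorm x))"
proof -
  let ?h = "\<lambda>y :: int ^ 'n. exp (- a * real_of_int (ldnorm y))"
  have "llap ?h x = (\<Sum>i\<in>UNIV. ?h (x + lunit i) + ?h (x - lunit i) - 2 * ?h x)"
    by (rule llap_eq_sum_directions)
  also have "\<dots> \<le> (\<Sum>i\<in>(UNIV :: 'n set). (exp a - 1) * ?h x)"
    using exp_ldnorm_neighbours_le[OF assms] by (intro sum_mono) (simp add: algebra_simps)
  finally show ?thesis
    by simp
qed

lemma half_le_one_minus_exp_neg:
  fixes t :: real
  assumes "0 \<le> t" "t \<le> 1"
  shows "t / 2 \<le> 1 - exp (- t)"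
proof -
  have "exp (- t) * (1 + t) \<le> exp (- t) * exp t"
    by (intro mult_left_mono exp_ge_add_one_self) simp
  then have "t \<le> (1 - exp (- t)) * (1 + t)"
    by (simp add: exp_minus algebra_simps)
  also have "\<dots> \<le> (1 - exp (- t)) * 2"
    using assms by (intro mult_left_mono) simp_all
  finally show ?thesis
    by simp
qed

lemma exp_decay_if_llap_ge:
  fixes w :: "int ^ 'n::finite \<Rightarrow> real"
  assumes "vanishes_at_infinity w" and "c > 0" "a \<ge> 0" "real CARD('n) * (exp a - 1) \<le> c"
    and llap_w: "\<And>x. R < real_of_int (ldnorm x) \<Longrightarrow> c * w x \<le> llap w x"
  shows "\<exists>C. \<forall>x. w x \<le> C * exp (- a * real_of_int (ldnorm x))"
proof -
  define h where "h x = exp (- a * real_of_int (ldnorm x))" for x :: "int ^ 'n"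
  have llap_h: "llap h x \<le> c * h x" for x
  proof -
    have "llap h x \<le> real CARD('n) * (exp a - 1) * h x"
      unfolding h_def using \<open>a \<ge> 0\<close> by (rule llap_exp_ldnorm_le)
    also have "\<dots> \<le> c * h x"
      using assms(4) by (intro mult_right_mono) (simp_all add: h_def)
    finally show ?thesis .
  qed
  obtain W where W: "\<And>x. \<bar>w x\<bar> \<le> W"
    using vanishes_at_infinity_imp_in_linf[OF assms(1)] by (auto simp: in_linf_def)
  have "W \<ge> 0"
    using W[of 0] by (rule order_trans[OF abs_ge_zero])
  define C where "C = W * exp (a * R)"
  have "C \<ge> 0"
    using \<open>W \<ge> 0\<close> by (simp add: C_def)
  have inside: "w x \<le> C * h x" if "real_of_int (ldnorm x) \<le> R" for x
  proof -
    have "exp (- (a * R)) \<le> h x"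
      using that \<open>a \<ge> 0\<close> by (simp add: h_def mult_left_mono)
    then have "W * exp (a * R) * exp (- (a * R)) \<le> C * h x"
      unfolding C_def using \<open>W \<ge> 0\<close> by (intro mult_left_mono) simp_all
    then have "W \<le> C * h x"
      by (simp add: mult.assoc flip: exp_add)
    then show ?thesis
      using W[of x] by linarith
  qed
  have "w x - C * h x \<le> 0" for x
  proof (rule maximum_principle)
    show "vanishes_at_infinity (\<lambda>x. max (w x - C * h x) 0)"
    proof (rule vanishes_at_infinity_dominated[OF assms(1)])
      fix y
      have "0 \<le> C * h y"
        using \<open>C \<ge> 0\<close> by (simp add: h_def)
      then show "\<bar>max (w y - C * h y) 0\<bar> \<le> \<bar>w y\<bar>"
        by arith
    qed
    fix x
    assume pos: "0 < w x - C * h x"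
    then have "R < real_of_int (ldnorm x)"
      using inside[of x] by linarith
    then have "c * (w x - C * h x) \<le> llap w x - C * llap h x"
      using llap_w[of x] mult_left_mono[OF llap_h[of x] \<open>C \<ge> 0\<close>] by (simp add: algebra_simps)
    also have "\<dots> = llap (\<lambda>x. w x - C * h x) x"
      using llap_linear[of 1 w "- C" h x] by simp
    finally show "0 < llap (\<lambda>x. w x - C * h x) x"
      using pos \<open>c > 0\<close> by (smt (verit) mult_pos_pos)
  qed
  then show ?thesis
    by (auto simp: h_def)
qed

lemma AH_solution_exp_decay:
  fixes v g :: "int ^ 'n::finite \<Rightarrow> real"
  assumes lam: "lam > 0" and sol: "AH_solution lam g v"
    and g_nonneg: "\<forall>x. g x \<ge> 0" and g_finite: "finite {x. g x \<noteq> 0}"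
    and a: "0 < a" "a \<le> ln (1 + lam / (2 * real CARD('n)))"
  shows "\<exists>C. \<forall>x. \<bar>v x\<bar> \<le> C * exp (- a * real_of_int (ldnorm x))"
proof -
  have v_nonpos: "v x \<le> 0" for x
    using AH_solution_nonpos[OF lam g_nonneg sol] .
  obtain R1 where R1: "\<forall>x. real_of_int (ldnorm x) > R1 \<longrightarrow> \<bar>v x\<bar> < 1"
    using sol unfolding AH_solution_def vanishes_at_infinity_def by (meson zero_less_one)
  obtain R2 where R2: "\<forall>x\<in>{x. g x \<noteq> 0}. real_of_int (ldnorm x) \<le> R2"
    using bdd_above_finite[OF finite_imageI[OF g_finite, of "\<lambda>x. real_of_int (ldnorm x)"]]
    by (auto simp: bdd_above_def)
  have "exp a \<le> 1 + lam / (2 * real CARD('n))"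
    using a lam by (simp add: ln_ge_iff[symmetric] add_pos_nonneg)
  then have "real CARD('n) * (exp a - 1) \<le> lam / 2"
    by (simp add: field_simps)
  moreover have "lam / 2 * - v x \<le> llap (\<lambda>y. - v y) x" if "max R1 R2 < real_of_int (ldnorm x)" for x
  proof -
    have "g x = 0" and "\<bar>v x\<bar> < 1"
      using that R1 R2 by force+
    then have "llap (\<lambda>y. - v y) x = lam * (1 - exp (- (- v x)))"
      using sol by (simp add: AH_solution_def llap_minus algebra_simps)
    moreover have "- v x / 2 \<le> 1 - exp (- (- v x))"
      using v_nonpos[of x] \<open>\<bar>v x\<bar> < 1\<close> by (intro half_le_one_minus_exp_neg) simp_all
    ultimately show ?thesis
      using mult_left_mono[of "- v x / 2" "1 - exp (- (- v x))" lam] lam by simp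
  qed
  moreover have "vanishes_at_infinity (\<lambda>y. - v y)"
    by (rule vanishes_at_infinity_dominated[of v]) (use sol in \<open>simp_all add: AH_solution_def\<close>)
  ultimately obtain C where "\<forall>x. - v x \<le> C * exp (- a * real_of_int (ldnorm x))"
    using exp_decay_if_llap_ge[of "\<lambda>y. - v y" "lam / 2" a "max R1 R2"] lam a by auto
  then show ?thesis
    using v_nonpos by (metis abs_of_nonpos)
qed

section \<open>Summability\<close>

lemma summable_on_exp_abs_int:
  fixes b :: real
  assumes "b > 0"
  shows "(\<lambda>k::int. exp (- b * \<bar>real_of_int k\<bar>)) summable_on UNIV"
proof -
  let ?f = "\<lambda>k::int. exp (- b * \<bar>real_of_int k\<bar>)"
  have "summable (\<lambda>n. exp (- b) ^ n)"
    using assms by (intro summable_geometric) simp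
  then have geometric: "(\<lambda>n::nat. exp (- b) ^ n) summable_on UNIV"
    by (simp add: summable_on_UNIV_nonneg_real_iff)
  have "?f summable_on range (\<lambda>n::nat. s * int n)" if "\<bar>s\<bar> = 1" for s
  proof -
    have "inj (\<lambda>n::nat. s * int n)"
      using that by (intro injI) auto
    moreover have "?f (s * int n) = exp (- b) ^ n" for n
      using that by (simp add: abs_mult exp_of_nat_mult[symmetric] mult.commute flip: of_int_abs)
    ultimately show ?thesis
      using geometric by (simp add: summable_on_reindex o_def)
  qed
  moreover have "UNIV = range (\<lambda>n::nat. 1 * int n) \<union> range (\<lambda>n::nat. - 1 * int n)"
    by (auto simp: image_iff) (metis minus_minus nonneg_int_cases not_le order.strict_iff_not
        neg_0_le_iff_le)
  ultimately show ?thesis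
    by (metis summable_on_union abs_1 abs_minus_cancel)
qed

lemma summable_on_exp_ldnorm:
  fixes b :: real
  assumes "b > 0"
  shows "(\<lambda>x::int ^ 'n::finite. exp (- b * real_of_int (ldnorm x))) summable_on UNIV"
proof -
  let ?f = "\<lambda>k::int. exp (- b * \<bar>real_of_int k\<bar>)"
  have "Infinite_Set_Sum.abs_summable_on (\<lambda>g. \<Prod>i\<in>UNIV. ?f (g i)) (PiE (UNIV :: 'n set) (\<lambda>_. UNIV))"
    using summable_on_exp_abs_int[OF assms]
    by (intro abs_summable_on_prod_PiE) (simp_all add: abs_summable_equivalent[symmetric])
  then have "(\<lambda>g. \<Prod>i\<in>UNIV. ?f (g i)) summable_on (UNIV :: ('n \<Rightarrow> int) set)"
    by (simp add: abs_summable_equivalent[symmetric] abs_summable_summable)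
  moreover have "exp (- b * real_of_int (ldnorm (vec_lambda g :: int ^ 'n))) = (\<Prod>i\<in>UNIV. ?f (g i))" for g
    by (simp add: ldnorm_def ldist_def sum_distrib_left exp_sum)
  moreover have "bij (vec_lambda :: ('n \<Rightarrow> int) \<Rightarrow> int ^ 'n)"
    by (rule bij_betw_byWitness[where f' = vec_nth]) auto
  ultimately show ?thesis
    using summable_on_reindex_bij_betw[of vec_lambda UNIV UNIV
        "\<lambda>x :: int ^ 'n. exp (- b * real_of_int (ldnorm x))"] by simp
qed

lemma in_lp_if_exp_decay:
  fixes v :: "int ^ 'n::finite \<Rightarrow> real"
  assumes "a > 0" "q > 0" and decay: "\<forall>x. \<bar>v x\<bar> \<le> C * exp (- a * real_of_int (ldnorm x))"
  shows "in_lp q v"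
  unfolding in_lp_def
proof (rule summable_on_comparison_test)
  show "(\<lambda>x. C powr q * exp (- (a * q) * real_of_int (ldnorm x))) summable_on UNIV"
    using assms(1,2) by (intro summable_on_cmult_right summable_on_exp_ldnorm) simp
  have "C \<ge> 0"
    using decay[rule_format, of 0] by (simp add: ldnorm_def ldist_def)
  fix x :: "int ^ 'n"
  have "\<bar>v x\<bar> powr q \<le> (C * exp (- a * real_of_int (ldnorm x))) powr q"
    using decay assms(2) by (intro powr_mono2) auto
  also have "\<dots> = C powr q * exp (- (a * q) * real_of_int (ldnorm x))"
    using \<open>C \<ge> 0\<close> by (simp add: powr_mult exp_powr_real algebra_simps)
  finally show "\<bar>v x\<bar> powr q \<le> C powr q * exp (- (a * q) * real_of_int (ldnorm x))" .
qed simp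

lemma AH_solution_in_lp:
  fixes v g :: "int ^ 'n::finite \<Rightarrow> real"
  assumes "lam > 0" "AH_solution lam g v" "\<forall>x. g x \<ge> 0" "finite {x. g x \<noteq> 0}" "q > 0"
  shows "in_lp q v"
proof -
  define a where "a = ln (1 + lam / (2 * real CARD('n)))"
  have "a > 0"
    unfolding a_def using assms(1) by (intro ln_gt_zero) simp
  then obtain C where "\<forall>x. \<bar>v x\<bar> \<le> C * exp (- a * real_of_int (ldnorm x))"
    using AH_solution_exp_decay[OF assms(1-4)] by (auto simp: a_def)
  then show ?thesis
    by (rule in_lp_if_exp_decay[OF \<open>a > 0\<close> \<open>q > 0\<close>])
qed

lemma vortex_source_nonneg_finite:
  fixes p :: "nat \<Rightarrow> int ^ 'n::finite"
  assumes "g = (\<lambda>x. 4 * pi * (\<Sum>j=1..M. real (nn j) * ldelta (p j) x))"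
  shows "\<forall>x. g x \<ge> 0" and "finite {x. g x \<noteq> 0}"
proof -
  show "\<forall>x. g x \<ge> 0"
    using assms by (simp add: ldelta_def sum_nonneg)
  have "g x = 0" if "x \<notin> p ` {1..M}" for x
    using assms that by (auto simp: ldelta_def intro!: sum.neutral)
  then have "{x. g x \<noteq> 0} \<subseteq> p ` {1..M}"
    by blast
  then show "finite {x. g x \<noteq> 0}"
    by (rule finite_subset) simp
qed

theorem theorem1p2:
  fixes lam :: real and M :: nat
    and p :: "nat \<Rightarrow> int ^ 'n" and nn :: "nat \<Rightarrow> nat"
    and g u :: "int ^ 'n \<Rightarrow> real"
  assumes n2: "CARD('n) \<ge> 2"
    and lam: "lam > 0"
    and pdist: "inj_on p {1..M}"
    and npos: "\<forall>j\<in>{1..M}. nn j > 0"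
    and g_def: "g = (\<lambda>x. 4 * pi * (\<Sum>j=1..M. real (nn j) * ldelta (p j) x))"
    and u_sol: "CS_solution lam g u"
    and u_max: "\<forall>f. CS_solution lam g f \<longrightarrow> (\<forall>x. f x \<le> u x)"
  shows "(\<exists>!u'. AH_solution lam g u') \<and>
         (\<forall>u'. AH_solution lam g u' \<longrightarrow>
            (\<forall>q::real. q \<ge> 1 \<longrightarrow> in_lp q u') \<and> in_linf u' \<and>
            (\<forall>x. u x \<le> u' x \<and> u' x \<le> 0) \<and>
            (\<forall>e. 0 < e \<and> e < 1 \<longrightarrow>
               (\<exists>C R. \<forall>x. real_of_int (ldnorm x) > R \<longrightarrow>
                  \<bar>u' x\<bar> \<le> C * exp (- (ln (1 + lam / (2 * real CARD('n)))) * (1 - e)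
                                        * real_of_int (ldnorm x)))))"
proof -
  note g_nonneg = vortex_source_nonneg_finite(1)[OF g_def]
    and g_finite = vortex_source_nonneg_finite(2)[OF g_def]
  have unique: "\<exists>!u'. AH_solution lam g u'"
    using AH_solution_exists_if_CS_solution[OF lam g_nonneg u_sol] AH_solution_unique[OF lam] by blast
  define m where "m = ln (1 + lam / (2 * real CARD('n)))"
  have decay: "\<exists>C R. \<forall>x. real_of_int (ldnorm x) > R \<longrightarrow>
      \<bar>u' x\<bar> \<le> C * exp (- m * (1 - e) * real_of_int (ldnorm x))"
    if "AH_solution lam g u'" "0 < e \<and> e < 1" for u' e
  proof -
    have "m > 0"
      unfolding m_def using lam by (intro ln_gt_zero) simp
    then have "0 < m * (1 - e)" "m * (1 - e) \<le> m"
      using that(2) by (simp_all add: mult_left_le)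
    then show ?thesis
      using AH_solution_exp_decay[OF lam that(1) g_nonneg g_finite, of "m * (1 - e)"]
      by (auto simp: m_def)
  qed
  show ?thesis
    unfolding m_def[symmetric]
    using unique decay AH_solution_in_lp[OF lam _ g_nonneg g_finite] AH_solution_nonpos[OF lam g_nonneg]
      CS_solution_le_AH_solution[OF lam u_sol] vanishes_at_infinity_imp_in_linf
    by (auto simp: AH_solution_def)
qed

end
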